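(* There exists a fully-dynamic bin packing algorithm with constant worst-case recourse under general movement costs which, given items all of whose sizes satisfy $s_i\in[1/k,1/(k-1))$ for some integer $k\ge1$, packs them into bins of which all but one contain $k-1$ items and are hence at least $1-1/k$ full. (If all items have size $1/k$, the algorithm packs $k$ items in all bins but one.)
   Context: Fully-dynamic bin packing: items (size $s_i$, arbitrary movement cost $c_i\ge0$) are inserted and deleted over time; the algorithm maintains a packing of the current items into unit bins, paying $c_i$ each time it moves item $i$. Worst-case recourse $\gamma$ means that at each update the total movement cost incurred is at most $\gamma\cdot c_t$, where $c_t$ is the movement cost of the item inserted or deleted at that update. *)

theory Defs
  imports Complex_Main
begin

text \<open>Items carry an identifier (nat); an insertion reveals the item's size and
  movement cost. The state is a finite map from identifiers of currently
  present items to (size, cost).\<close>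

datatype upd = Ins nat real real | Del nat

type_synonym state = "nat \<Rightarrow> (real \<times> real) option"

fun step :: "state \<Rightarrow> upd \<Rightarrow> state" where
  "step S (Ins i s c) = S(i \<mapsto> (s, c))"
| "step S (Del i) = S(i := None)"

definition items :: "upd list \<Rightarrow> state" where
  "items us = foldl step Map.empty us"

fun upd_ok :: "state \<Rightarrow> upd \<Rightarrow> bool" where
  "upd_ok S (Ins i s c) = (S i = None \<and> 0 < s \<and> s \<le> 1 \<and> 0 \<le> c)"
| "upd_ok S (Del i) = (S i \<noteq> None)"

definition valid_seq :: "upd list \<Rightarrow> bool" where
  "valid_seq us = (\<forall>t < length us. upd_ok (items (take t us)) (us ! t))"

definition size_of :: "state \<Rightarrow> nat \<Rightarrow> real" where
  "size_of S i = fst (the (S i))"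

definition cost_of :: "state \<Rightarrow> nat \<Rightarrow> real" where
  "cost_of S i = snd (the (S i))"

fun upd_cost :: "state \<Rightarrow> upd \<Rightarrow> real" where
  "upd_cost S (Ins i s c) = c"
| "upd_cost S (Del i) = cost_of S i"

text \<open>A packing assigns each present item a bin label (nat).\<close>
definition bin_load :: "state \<Rightarrow> (nat \<Rightarrow> nat) \<Rightarrow> nat \<Rightarrow> real" where
  "bin_load S P b = (\<Sum>i \<in> {i \<in> dom S. P i = b}. size_of S i)"

definition feasible :: "state \<Rightarrow> (nat \<Rightarrow> nat) \<Rightarrow> bool" where
  "feasible S P = (\<forall>b. bin_load S P b \<le> 1)"

definition bin_count :: "state \<Rightarrow> (nat \<Rightarrow> nat) \<Rightarrow> nat \<Rightarrow> nat" where
  "bin_count S P b = card {i \<in> dom S. P i = b}"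

definition used_bins :: "state \<Rightarrow> (nat \<Rightarrow> nat) \<Rightarrow> nat set" where
  "used_bins S P = P ` dom S"

definition move_cost :: "state \<Rightarrow> state \<Rightarrow> (nat \<Rightarrow> nat) \<Rightarrow> (nat \<Rightarrow> nat) \<Rightarrow> real" where
  "move_cost S S' P P' = (\<Sum>i \<in> {i \<in> dom S \<inter> dom S'. P i \<noteq> P' i}. cost_of S' i)"

text \<open>Size class: s in [1/k, 1/(k-1)); for k = 1 the upper bound is +infinity.\<close>
definition in_class :: "nat \<Rightarrow> real \<Rightarrow> bool" where
  "in_class k s = (1 / real k \<le> s \<and> (k = 1 \<or> s < 1 / (real k - 1)))"

definition sizes_in :: "(real \<Rightarrow> bool) \<Rightarrow> upd list \<Rightarrow> bool" where
  "sizes_in Q us = (\<forall>u \<in> set us. \<forall>i s c. u = Ins i s c \<longrightarrow> Q s)"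

end

theory Submission
  imports Defs
begin

text \<open>Costs are rounded up to powers of two, their cost classes, which at most doubles them.
  The algorithm keeps the items in bins \<open>0, \<dots>, n - 1\<close> sorted by decreasing cost class, every
  bin but the last holding at least \<open>L\<close> items, where \<open>L = k\<close> as long as all sizes are exactly
  \<open>1/k\<close> and \<open>L = k - 1\<close> otherwise; since sizes lie in \<open>[1/k, 1/(k-1))\<close>, any \<open>L\<close> items fit
  into a bin, and a bin holding \<open>k\<close> items holds only items of size \<open>1/k\<close>.
  A deletion may leave one bin an item short. It is refilled by a costliest item of a later bin,
  which may leave that bin short, and so on; the moved items have strictly, hence at least
  geometrically, decreasing cost classes, so the total cost is at most twice the class of the
  deleted item. An insertion puts the new item into the first bin holding an item of lower class,
  displacing at most two such items, which are reinserted recursively; the same geometric decay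
  bounds the cost by nine times the class of the inserted item.\<close>

section \<open>Cost classes\<close>

definition cost_class :: "real \<Rightarrow> real" where
  "cost_class c = (if c \<le> 0 then 0 else 2 powr (real_of_int \<lfloor>log 2 c\<rfloor> + 1))"

lemma cost_class_nonneg: "0 \<le> cost_class c"
  by (simp add: cost_class_def)

lemma powr_floor_log_bounds:
  assumes "0 < c"
  shows "2 powr (real_of_int \<lfloor>log 2 c\<rfloor>) \<le> c" "c < 2 powr (real_of_int \<lfloor>log 2 c\<rfloor> + 1)"
  using floor_log_eq_powr_iff[of c 2 "\<lfloor>log 2 c\<rfloor>"] assms by simp_all

lemma cost_class_ge: "0 \<le> c \<Longrightarrow> c \<le> cost_class c"
  using powr_floor_log_bounds[of c] by (auto simp: cost_class_def)

lemma cost_class_le_double: "0 \<le> c \<Longrightarrow> cost_class c \<le> 2 * c"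
  using powr_floor_log_bounds[of c] by (auto simp: cost_class_def powr_add)

lemma cost_class_gap:
  assumes "cost_class a < cost_class b"
  shows "2 * cost_class a \<le> cost_class b"
proof (cases "a \<le> 0 \<or> b \<le> 0")
  case True
  then show ?thesis using assms cost_class_nonneg[of b] by (auto simp: cost_class_def)
next
  case False
  let ?ea = "\<lfloor>log 2 a\<rfloor>" and ?eb = "\<lfloor>log 2 b\<rfloor>"
  have "?ea < ?eb" using assms False by (simp add: cost_class_def)
  then have "2 powr (real_of_int ?ea + 2) \<le> 2 powr (real_of_int ?eb + 1)" by simp
  then show ?thesis using False by (simp add: cost_class_def powr_add)
qed

section \<open>Class-sorted packings\<close>

definition bin :: "(nat \<Rightarrow> nat) \<Rightarrow> nat set \<Rightarrow> nat \<Rightarrow> nat set" where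
  "bin P I b = {i \<in> I. P i = b}"

definition class_sorted :: "(nat \<Rightarrow> real) \<Rightarrow> nat set \<Rightarrow> (nat \<Rightarrow> nat) \<Rightarrow> bool" where
  "class_sorted K I P \<longleftrightarrow> (\<forall>i\<in>I. \<forall>j\<in>I. P i < P j \<longrightarrow> K j \<le> K i)"

definition bin_demand :: "nat \<Rightarrow> nat \<Rightarrow> nat \<Rightarrow> nat" where
  "bin_demand L n b = (if Suc b = n then 1 else L)"

definition canonical ::
    "nat \<Rightarrow> (nat \<Rightarrow> real) \<Rightarrow> (nat \<Rightarrow> real) \<Rightarrow> nat set \<Rightarrow> (nat \<Rightarrow> nat) \<Rightarrow> nat \<Rightarrow> bool" where
  "canonical L sz K I P n \<longleftrightarrow> finite I \<and> (\<forall>i\<in>I. P i < n)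
     \<and> (\<forall>b<n. bin_demand L n b \<le> card (bin P I b))
     \<and> (\<forall>b<n. sum sz (bin P I b) \<le> 1) \<and> class_sorted K I P"

definition deficient ::
    "nat \<Rightarrow> (nat \<Rightarrow> real) \<Rightarrow> (nat \<Rightarrow> real) \<Rightarrow> nat set \<Rightarrow> (nat \<Rightarrow> nat) \<Rightarrow> nat \<Rightarrow> nat \<Rightarrow> bool" where
  "deficient L sz K I P n q \<longleftrightarrow> finite I \<and> (\<forall>i\<in>I. P i < n) \<and> Suc q < n
     \<and> card (bin P I q) + 1 = L
     \<and> (\<forall>b<n. b \<noteq> q \<longrightarrow> bin_demand L n b \<le> card (bin P I b))
     \<and> (\<forall>b<n. sum sz (bin P I b) \<le> 1) \<and> class_sorted K I P"

definition relocation_cost :: "(nat \<Rightarrow> real) \<Rightarrow> nat set \<Rightarrow> (nat \<Rightarrow> nat) \<Rightarrow> (nat \<Rightarrow> nat) \<Rightarrow> real" where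
  "relocation_cost cst I P P' = sum cst {i \<in> I. P i \<noteq> P' i}"

lemma finite_bin: "finite I \<Longrightarrow> finite (bin P I b)"
  by (simp add: bin_def)

lemma bin_Diff: "bin P (I - E) b = bin P I b - E"
  by (auto simp: bin_def)

lemma bin_fun_upd:
  "x \<in> I \<Longrightarrow> bin (P(x := q)) I b = (if b = q then insert x (bin P I b) else bin P I b - {x})"
  by (auto simp: bin_def)

lemma bin_insert_fun_upd:
  assumes "x \<notin> I" "E \<subseteq> bin P I f"
  shows "bin (P(x := f)) (insert x (I - E)) b = (if b = f then insert x (bin P I f - E) else bin P I b)"
  using assms by (auto simp: bin_def)

lemma class_sorted_subset: "class_sorted K I P \<Longrightarrow> J \<subseteq> I \<Longrightarrow> class_sorted K J P"
  unfolding class_sorted_def by blast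

lemma class_sorted_insert:
  assumes "class_sorted K J P" "x \<notin> J"
    "\<forall>i\<in>J. P i < b \<longrightarrow> K x \<le> K i" "\<forall>i\<in>J. b < P i \<longrightarrow> K i \<le> K x"
  shows "class_sorted K (insert x J) (P(x := b))"
  using assms unfolding class_sorted_def by auto

lemma canonical_empty: "canonical L sz K {} P 0"
  by (simp add: canonical_def class_sorted_def)

lemma canonical_cong:
  assumes "canonical L sz K I P n" "\<forall>j\<in>I. sz j = sz' j" "\<forall>j\<in>I. K j = K' j" "L' \<le> L"
  shows "canonical L' sz' K' I P n"
proof -
  have "sum sz (bin P I b) = sum sz' (bin P I b)" for b
    using assms(2) by (intro sum.cong) (auto simp: bin_def)
  moreover have "class_sorted K' I P" using assms(1,3) unfolding canonical_def class_sorted_def by metis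
  moreover have "bin_demand L' n b \<le> bin_demand L n b" for b
    using assms(4) by (simp add: bin_demand_def)
  ultimately show ?thesis using assms(1) unfolding canonical_def by (metis le_trans)
qed

lemma sum_Un_le_nonneg:
  fixes f :: "'a \<Rightarrow> real"
  assumes "finite A" "finite B" "\<forall>i\<in>A \<union> B. 0 \<le> f i"
  shows "sum f (A \<union> B) \<le> sum f A + sum f B"
proof -
  have "0 \<le> sum f (A \<inter> B)" using assms by (intro sum_nonneg) auto
  then show ?thesis using sum_Un[OF assms(1,2), of f] by simp
qed

lemma relocation_cost_self: "relocation_cost cst I P P = 0"
  by (simp add: relocation_cost_def)

lemma relocation_cost_new_item: "x \<notin> I \<Longrightarrow> relocation_cost cst I P (P(x := b)) = 0"
  unfolding relocation_cost_def by (rule sum.neutral) auto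

lemma relocation_cost_trans:
  assumes "finite I" "\<forall>i\<in>I. 0 \<le> cst i"
  shows "relocation_cost cst I P P2 \<le> relocation_cost cst I P P1 + relocation_cost cst I P1 P2"
proof -
  have "relocation_cost cst I P P2 \<le> sum cst ({i \<in> I. P i \<noteq> P1 i} \<union> {i \<in> I. P1 i \<noteq> P2 i})"
    unfolding relocation_cost_def using assms by (intro sum_mono2) auto
  also have "\<dots> \<le> relocation_cost cst I P P1 + relocation_cost cst I P1 P2"
    unfolding relocation_cost_def using assms by (intro sum_Un_le_nonneg) auto
  finally show ?thesis .
qed

text \<open>The items of \<open>E\<close> leave \<open>I\<close> and are reinserted in the two later phases.\<close>

lemma relocation_cost_chain:
  assumes "finite I" "finite J2" "E \<subseteq> I" "J1 \<subseteq> J2"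
    and agree: "\<forall>i\<in>I - E. i \<in> J1 \<and> P1 i = P i"
    and nonneg: "\<forall>i\<in>I \<union> J2. 0 \<le> cst i"
  shows "relocation_cost cst I P P3
    \<le> sum cst E + relocation_cost cst J1 P1 P2 + relocation_cost cst J2 P2 P3"
proof -
  have fin: "finite E" "finite J1" using assms(1-4) finite_subset by blast+
  have "{i \<in> I. P i \<noteq> P3 i} \<subseteq> E \<union> {i \<in> J1. P1 i \<noteq> P2 i} \<union> {i \<in> J2. P2 i \<noteq> P3 i}"
    using agree assms(4) by auto
  then have "relocation_cost cst I P P3
      \<le> sum cst (E \<union> {i \<in> J1. P1 i \<noteq> P2 i} \<union> {i \<in> J2. P2 i \<noteq> P3 i})"
    unfolding relocation_cost_def using fin assms by (intro sum_mono2) auto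
  also have "\<dots> \<le> sum cst (E \<union> {i \<in> J1. P1 i \<noteq> P2 i}) + sum cst {i \<in> J2. P2 i \<noteq> P3 i}"
    using fin assms by (intro sum_Un_le_nonneg) auto
  also have "sum cst (E \<union> {i \<in> J1. P1 i \<noteq> P2 i}) \<le> sum cst E + sum cst {i \<in> J1. P1 i \<noteq> P2 i}"
    using fin assms by (intro sum_Un_le_nonneg) auto
  finally show ?thesis unfolding relocation_cost_def by simp
qed

lemma canonical_or_deficient_after_removal:
  assumes fin: "finite I" and range: "\<forall>i\<in>I. P i < n"
    and load: "\<forall>b<n. sum sz (bin P I b) \<le> 1" and sorted: "class_sorted K I P" and "1 \<le> L"
    and others: "\<forall>b<n. b \<noteq> d \<longrightarrow> bin_demand L n b \<le> card (bin P I b)"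
    and d: "d < n" "bin_demand L n d \<le> Suc (card (bin P I d))"
  shows "(\<exists>n'. canonical L sz K I P n') \<or> deficient L sz K I P n d"
proof -
  consider (emptied) "Suc d = n" "bin P I d = {}"
    | (filled) "bin_demand L n d \<le> card (bin P I d)"
    | (short) "Suc d < n" "card (bin P I d) + 1 = L"
  proof (cases "Suc d = n")
    case last: True
    show ?thesis
    proof (cases "bin P I d = {}")
      case True
      then show ?thesis using last by (intro that(1))
    next
      case False
      then have "1 \<le> card (bin P I d)" using fin by (simp add: Suc_le_eq card_gt_0_iff finite_bin)
      then show ?thesis using last by (intro that(2)) (simp add: bin_demand_def)
    qed
  next
    case not_last: False
    show ?thesis
    proof (cases "L \<le> card (bin P I d)")
      case True
      then show ?thesis using not_last by (intro that(2)) (simp add: bin_demand_def)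
    next
      case False
      then show ?thesis using not_last d by (intro that(3)) (auto simp: bin_demand_def)
    qed
  qed
  then show ?thesis
  proof cases
    case emptied
    have "\<forall>i\<in>I. P i < n - 1"
    proof
      fix i assume "i \<in> I"
      then have "P i < n" "P i \<noteq> d" using range emptied(2) by (auto simp: bin_def)
      then show "P i < n - 1" using emptied(1) by simp
    qed
    moreover have "\<forall>b<n - 1. bin_demand L (n - 1) b \<le> card (bin P I b)"
    proof (intro allI impI)
      fix b assume "b < n - 1"
      then have "L \<le> card (bin P I b)" using others emptied(1) by (simp add: bin_demand_def)
      then show "bin_demand L (n - 1) b \<le> card (bin P I b)"
        using \<open>1 \<le> L\<close> by (simp add: bin_demand_def)
    qed
    ultimately have "canonical L sz K I P (n - 1)"
      using fin load sorted by (simp add: canonical_def)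
    then show ?thesis by blast
  next
    case filled
    then have "canonical L sz K I P n"
      unfolding canonical_def using fin range load sorted others by (metis le_refl)
    then show ?thesis by blast
  next
    case short
    then show ?thesis using fin range load sorted others unfolding deficient_def by blast
  qed
qed

lemma obtain_last_costliest:
  fixes K :: "'a \<Rightarrow> real" and P :: "'a \<Rightarrow> 'b::linorder"
  assumes "finite A" "a \<in> A"
  obtains x where "x \<in> A" "\<forall>i\<in>A. K i \<le> K x" "\<forall>i\<in>A. P x < P i \<longrightarrow> K i < K x"
proof -
  define M where "M = Max (K ` A)"
  have M: "\<forall>i\<in>A. K i \<le> M" "M \<in> K ` A"
    using assms by (auto simp: M_def intro!: Max_in)
  define B where "B = P ` {i \<in> A. K i = M}"
  have "finite B" "B \<noteq> {}" using assms M(2) by (auto simp: B_def)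
  then have "Max B \<in> B" by simp
  then obtain x where x: "x \<in> A" "K x = M" "P x = Max B" by (auto simp: B_def)
  have "K i < K x" if "i \<in> A" "P x < P i" for i
  proof -
    have "K i \<noteq> M"
    proof
      assume "K i = M"
      then have "P i \<in> B" using that by (auto simp: B_def)
      then show False using that x \<open>finite B\<close> by (simp add: leD)
    qed
    then show ?thesis using M(1) that x by force
  qed
  then show ?thesis using that x M(1) by blast
qed

section \<open>Items of one size class\<close>

text \<open>\<open>K\<close> assigns each item its cost class and \<open>L\<close> is the number of items demanded of every bin
  but the last: \<open>k\<close> while all sizes equal \<open>1/k\<close>, and \<open>k - 1\<close> otherwise.\<close>

locale size_class =
  fixes k L :: nat and sz cst K :: "nat \<Rightarrow> real"
  assumes k_pos: "1 \<le> k" and demand_cases: "L = k \<or> (L = k - 1 \<and> 2 \<le> k)"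
    and class_gap: "\<And>a b. K a < K b \<Longrightarrow> 2 * K a \<le> K b"
begin

definition admissible :: "nat set \<Rightarrow> bool" where
  "admissible I \<longleftrightarrow> (\<forall>i\<in>I. in_class k (sz i) \<and> 0 \<le> cst i \<and> cst i \<le> K i)
      \<and> (L = k \<longrightarrow> (\<forall>i\<in>I. sz i = 1 / real k))"

lemma admissible_subset: "admissible J \<Longrightarrow> I \<subseteq> J \<Longrightarrow> admissible I"
  unfolding admissible_def by blast

lemma demand_pos: "1 \<le> L"
  using k_pos demand_cases by auto

lemma size_pos:
  assumes "admissible I" "i \<in> I"
  shows "0 < sz i"
proof -
  have "1 / real k \<le> sz i" using assms unfolding admissible_def in_class_def by blast
  moreover have "0 < 1 / real k" using k_pos by simp
  ultimately show ?thesis by linarith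
qed

lemma load_mono: "admissible I \<Longrightarrow> A \<subseteq> B \<Longrightarrow> B \<subseteq> I \<Longrightarrow> finite B \<Longrightarrow> sum sz A \<le> sum sz B"
  using size_pos[of I] by (intro sum_mono2) (auto intro: less_imp_le)

lemma load_le_one:
  assumes "admissible I" "B \<subseteq> I" "finite B" "card B \<le> L"
  shows "sum sz B \<le> 1"
proof (cases "L = k")
  case True
  then have "\<forall>i\<in>B. sz i = 1 / real k"
    using assms(1,2) unfolding admissible_def by blast
  then have "sum sz B = real (card B) / real k" by simp
  also have "\<dots> \<le> 1" using assms(4) True k_pos by simp
  finally show ?thesis .
next
  case False
  then have k: "L = k - 1" "2 \<le> k" using demand_cases by auto
  have "\<forall>i\<in>B. sz i \<le> 1 / (real k - 1)"
    using assms(1,2) k unfolding admissible_def in_class_def by fastforce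
  then have "sum sz B \<le> real (card B) * (1 / (real k - 1))"
    using sum_bounded_above[of B sz "1 / (real k - 1)"] by blast
  also have "\<dots> \<le> (real k - 1) * (1 / (real k - 1))"
    using assms(4) k by (intro mult_right_mono) auto
  also have "\<dots> = 1" using k by simp
  finally show ?thesis .
qed

lemma card_gt_demand_if_overloaded:
  "admissible I \<Longrightarrow> B \<subseteq> I \<Longrightarrow> finite B \<Longrightarrow> 1 < sum sz B \<Longrightarrow> L < card B"
  using load_le_one[of I B] by linarith

lemma full_bin_uniform:
  assumes "admissible I" "B \<subseteq> I" "finite B" "sum sz B \<le> 1" "k \<le> card B"
  shows "card B = k" "\<forall>i\<in>B. sz i = 1 / real k"
proof -
  have ge: "\<forall>i\<in>B. 1 / real k \<le> sz i"
    using assms(1,2) unfolding admissible_def in_class_def by blast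
  then have "real (card B) / real k \<le> sum sz B"
    using sum_mono[of B "\<lambda>_. 1 / real k" sz] by simp
  then have "real (card B) / real k \<le> 1" using assms(4) by linarith
  then have "real (card B) \<le> real k" using k_pos by (simp add: divide_le_eq)
  then show card: "card B = k" using assms(5) by simp
  show "\<forall>i\<in>B. sz i = 1 / real k"
  proof (rule ccontr)
    assume "\<not> (\<forall>i\<in>B. sz i = 1 / real k)"
    then obtain i where "i \<in> B" "1 / real k < sz i" using ge by force
    then have "sum (\<lambda>_. 1 / real k) B < sum sz B"
      using ge assms(3) by (intro sum_strict_mono_ex1) auto
    then show False using card assms(4) k_pos by simp
  qed
qed

end

section \<open>Deletion\<close>

context size_class
begin

lemma refill_deficient_bin:
  assumes def: "deficient L sz K I P n q" and adm: "admissible I"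
    and x: "x \<in> I" "q < P x" and costliest: "\<forall>i\<in>I. q < P i \<longrightarrow> K i \<le> K x"
  shows "(\<exists>n'. canonical L sz K I (P(x := q)) n') \<or> deficient L sz K I (P(x := q)) n (P x)"
proof -
  have fin: "finite I" and range: "\<forall>i\<in>I. P i < n" and q: "Suc q < n" "card (bin P I q) + 1 = L"
    and demand: "\<forall>b<n. b \<noteq> q \<longrightarrow> bin_demand L n b \<le> card (bin P I b)"
    and load: "\<forall>b<n. sum sz (bin P I b) \<le> 1" and sorted: "class_sorted K I P"
    using def unfolding deficient_def by blast+
  define P1 where "P1 = P(x := q)"
  have bins: "bin P1 I b = (if b = q then insert x (bin P I b) else bin P I b - {x})" for b
    unfolding P1_def using bin_fun_upd[OF x(1)] by simp
  have "x \<notin> bin P I q" "x \<in> bin P I (P x)" using x by (auto simp: bin_def)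
  then have card_q: "card (bin P1 I q) = L"
    and card_Px: "card (bin P I (P x)) = Suc (card (bin P1 I (P x)))"
    using bins[of q] bins[of "P x"] q x(2) card.remove[OF finite_bin[OF fin]] fin
    by (simp_all add: finite_bin)
  have Px: "P x < n" using range x by blast
  have range1: "\<forall>i\<in>I. P1 i < n" using range q(1) by (simp add: P1_def)
  have demand1: "\<forall>b<n. b \<noteq> P x \<longrightarrow> bin_demand L n b \<le> card (bin P1 I b)"
    using demand card_q q(1) bins by (auto simp: bin_demand_def bin_def)
  have load1: "\<forall>b<n. sum sz (bin P1 I b) \<le> 1"
  proof (intro allI impI)
    fix b assume "b < n"
    show "sum sz (bin P1 I b) \<le> 1"
    proof (cases "b = q")
      case True
      then show ?thesis using card_q adm fin by (intro load_le_one) (auto simp: bin_def)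
    next
      case False
      then have "sum sz (bin P1 I b) \<le> sum sz (bin P I b)"
        using bins[of b] adm fin by (intro load_mono) (auto simp: bin_def)
      then show ?thesis using load \<open>b < n\<close> by fastforce
    qed
  qed
  have sorted1: "class_sorted K I P1"
    unfolding class_sorted_def
  proof (intro ballI impI)
    fix i j assume ij: "i \<in> I" "j \<in> I" "P1 i < P1 j"
    show "K j \<le> K i"
    proof (cases "i = x")
      case True
      then have "j \<noteq> x" using ij by (auto simp: P1_def)
      then have "q < P j" using ij True by (simp add: P1_def)
      then show ?thesis using costliest ij(2) True by simp
    next
      case i: False
      show ?thesis
      proof (cases "j = x")
        case True
        then have "P i < P x" using ij i x(2) by (simp add: P1_def)
        then show ?thesis using sorted ij(1) x(1) True unfolding class_sorted_def by blast
      next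
        case False
        then show ?thesis using ij i sorted unfolding class_sorted_def P1_def by simp
      qed
    qed
  qed
  have "bin_demand L n (P x) \<le> card (bin P I (P x))" using demand Px x(2) by simp
  then show ?thesis
    unfolding P1_def[symmetric] using fin range1 load1 sorted1 demand_pos demand1 Px card_Px
    by (intro canonical_or_deficient_after_removal) auto
qed

text \<open>Taking the item from the last of the bins holding a costliest item makes every item behind
  that bin of strictly smaller, hence at most half the cost class.\<close>

lemma repair_deficiency:
  assumes "deficient L sz K I P n q" "admissible I" "\<forall>i\<in>I. q < P i \<longrightarrow> K i \<le> M"
  shows "\<exists>P' n'. canonical L sz K I P' n' \<and> relocation_cost cst I P P' \<le> 2 * M"
  using assms
proof (induction "n - q" arbitrary: P q M rule: less_induct)
  case less
  have fin: "finite I" and q: "Suc q < n"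
    and demand: "\<forall>b<n. b \<noteq> q \<longrightarrow> bin_demand L n b \<le> card (bin P I b)"
    using less.prems(1) unfolding deficient_def by blast+
  have last_bin: "n - 1 < n" "n - 1 \<noteq> q" "Suc (n - 1) = n" using q by auto
  then have "bin_demand L n (n - 1) \<le> card (bin P I (n - 1))" using demand by blast
  then have "1 \<le> card (bin P I (n - 1))" using last_bin(3) by (simp add: bin_demand_def)
  then obtain a where "a \<in> bin P I (n - 1)" by (metis card.empty ex_in_conv not_one_le_zero)
  then have a: "a \<in> {i \<in> I. q < P i}" using q by (auto simp: bin_def)
  obtain x where "x \<in> {i \<in> I. q < P i}" "\<forall>i\<in>{i \<in> I. q < P i}. K i \<le> K x"
    "\<forall>i\<in>{i \<in> I. q < P i}. P x < P i \<longrightarrow> K i < K x"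
    using obtain_last_costliest[OF _ a, of K P] fin by auto
  then have x: "x \<in> I" "q < P x" and costliest: "\<forall>i\<in>I. q < P i \<longrightarrow> K i \<le> K x"
    and last: "\<forall>i\<in>I. q < P i \<longrightarrow> P x < P i \<longrightarrow> K i < K x"
    by auto
  have "{i \<in> I. P i \<noteq> (P(x := q)) i} = {x}" using x by auto
  then have cost1: "relocation_cost cst I P (P(x := q)) = cst x" by (simp add: relocation_cost_def)
  have cst_x: "0 \<le> cst x" "cst x \<le> K x" "K x \<le> M"
    using less.prems(2,3) x unfolding admissible_def by auto
  from refill_deficient_bin[OF less.prems(1,2) x costliest] show ?case
  proof
    assume "\<exists>n'. canonical L sz K I (P(x := q)) n'"
    moreover have "cst x \<le> 2 * M" using cst_x by linarith
    ultimately show ?thesis using cost1 by auto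
  next
    assume def1: "deficient L sz K I (P(x := q)) n (P x)"
    have "\<forall>i\<in>I. P x < (P(x := q)) i \<longrightarrow> K i \<le> K x / 2"
    proof (intro ballI impI)
      fix i assume i: "i \<in> I" "P x < (P(x := q)) i"
      then have "i \<noteq> x" using x(2) by auto
      then have "K i < K x" using i last x(2) by simp
      then show "K i \<le> K x / 2" using class_gap by fastforce
    qed
    moreover have "n - P x < n - q" using x def1 unfolding deficient_def by auto
    ultimately obtain P2 n2 where P2: "canonical L sz K I P2 n2"
      "relocation_cost cst I (P(x := q)) P2 \<le> 2 * (K x / 2)"
      using less.hyps def1 less.prems(2) by blast
    have "\<forall>i\<in>I. 0 \<le> cst i" using less.prems(2) unfolding admissible_def by blast
    then have "relocation_cost cst I P P2 \<le> cst x + K x"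
      using relocation_cost_trans[OF fin, of cst P P2 "P(x := q)"] cost1 P2(2) by simp
    then show ?thesis using P2(1) cst_x by (intro exI[of _ P2] exI[of _ n2]) simp
  qed
qed

lemma canonical_delete:
  assumes inv: "canonical L sz K I P n" and adm: "admissible I" and y: "y \<in> I"
  shows "\<exists>P' n'. canonical L sz K (I - {y}) P' n'
    \<and> relocation_cost cst (I - {y}) P P' \<le> 2 * K y"
proof -
  have fin: "finite I" and range: "\<forall>i\<in>I. P i < n"
    and demand: "\<forall>b<n. bin_demand L n b \<le> card (bin P I b)"
    and load: "\<forall>b<n. sum sz (bin P I b) \<le> 1" and sorted: "class_sorted K I P"
    using inv unfolding canonical_def by blast+
  have bins: "bin P (I - {y}) b = bin P I b - {y}" for b by (rule bin_Diff)
  have load': "\<forall>b<n. sum sz (bin P (I - {y}) b) \<le> 1"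
  proof (intro allI impI)
    fix b assume "b < n"
    have "sum sz (bin P (I - {y}) b) \<le> sum sz (bin P I b)"
      using bins adm fin by (intro load_mono) (auto simp: bin_def)
    then show "sum sz (bin P (I - {y}) b) \<le> 1" using load \<open>b < n\<close> by fastforce
  qed
  have Py: "P y < n" using range y by blast
  have "y \<in> bin P I (P y)" using y by (simp add: bin_def)
  then have "card (bin P I (P y)) = Suc (card (bin P (I - {y}) (P y)))"
    using bins card.remove[OF finite_bin[OF fin]] by simp
  then have demand_y: "bin_demand L n (P y) \<le> Suc (card (bin P (I - {y}) (P y)))"
    using demand Py by metis
  have "\<forall>b<n. b \<noteq> P y \<longrightarrow> bin_demand L n b \<le> card (bin P (I - {y}) b)"
    using demand bins by (auto simp: bin_def)
  then have "(\<exists>n'. canonical L sz K (I - {y}) P n') \<or> deficient L sz K (I - {y}) P n (P y)"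
    using fin range class_sorted_subset[OF sorted]
    by (intro canonical_or_deficient_after_removal[OF _ _ load' _ demand_pos _ Py demand_y]) auto
  moreover have "0 \<le> K y" using adm y unfolding admissible_def by force
  moreover have "\<forall>i\<in>I - {y}. P y < P i \<longrightarrow> K i \<le> K y"
    using sorted y unfolding class_sorted_def by blast
  ultimately show ?thesis
    using repair_deficiency[OF _ admissible_subset[OF adm]] relocation_cost_self
    by (metis Diff_subset mult_nonneg_nonneg zero_le_numeral)
qed

end

section \<open>Insertion\<close>

lemma canonical_place_into_bin:
  assumes inv: "canonical L sz K I P n" and x: "x \<notin> I" and E: "E \<subseteq> bin P I f" and f: "f < n"
    and demand_f: "bin_demand L n f \<le> card (insert x (bin P I f - E))"
    and load_f: "sum sz (insert x (bin P I f - E)) \<le> 1"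
    and before: "\<forall>i\<in>I. P i < f \<longrightarrow> K x \<le> K i" and after: "\<forall>i\<in>I. f < P i \<longrightarrow> K i \<le> K x"
  shows "canonical L sz K (insert x (I - E)) (P(x := f)) n"
proof -
  have fin: "finite I" and range: "\<forall>i\<in>I. P i < n"
    and demand: "\<forall>b<n. bin_demand L n b \<le> card (bin P I b)"
    and load: "\<forall>b<n. sum sz (bin P I b) \<le> 1" and sorted: "class_sorted K I P"
    using inv unfolding canonical_def by blast+
  have "class_sorted K (insert x (I - E)) (P(x := f))"
    using class_sorted_subset[OF sorted, of "I - E"] x before after
    by (intro class_sorted_insert) auto
  moreover have "\<forall>b<n. bin_demand L n b \<le> card (bin (P(x := f)) (insert x (I - E)) b)"
    using bin_insert_fun_upd[OF x E] demand_f demand by simp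
  moreover have "\<forall>b<n. sum sz (bin (P(x := f)) (insert x (I - E)) b) \<le> 1"
    using bin_insert_fun_upd[OF x E] load_f load by simp
  ultimately show ?thesis using fin range f unfolding canonical_def by auto
qed

lemma card_cheaper_decreases:
  fixes K :: "'a \<Rightarrow> real"
  assumes "finite I" "J \<subseteq> {i \<in> I. K i < c} - {w}" "w \<in> I" "K w < c"
  shows "card J < card {i \<in> I. K i < c}"
proof -
  have "card J \<le> card ({i \<in> I. K i < c} - {w})" using assms by (intro card_mono) auto
  also have "\<dots> < card {i \<in> I. K i < c}" using assms by (intro card_Diff1_less) auto
  finally show ?thesis .
qed

definition segregated :: "(nat \<Rightarrow> real) \<Rightarrow> nat set \<Rightarrow> (nat \<Rightarrow> nat) \<Rightarrow> nat \<Rightarrow> bool" where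
  "segregated K I P x \<longleftrightarrow> (\<forall>i\<in>I. \<forall>j\<in>I. P i = P j \<longrightarrow> K i < K x \<longrightarrow> K j < K x)"

context size_class
begin

lemma canonical_remove:
  assumes inv: "canonical L sz K I P n" and adm: "admissible I" and w: "w \<in> I"
    and demand_w: "bin_demand L n (P w) \<le> card (bin P I (P w)) - 1"
  shows "canonical L sz K (I - {w}) P n"
proof -
  have fin: "finite I" and range: "\<forall>i\<in>I. P i < n"
    and demand: "\<forall>b<n. bin_demand L n b \<le> card (bin P I b)"
    and load: "\<forall>b<n. sum sz (bin P I b) \<le> 1" and sorted: "class_sorted K I P"
    using inv unfolding canonical_def by blast+
  have "w \<in> bin P I (P w)" using w by (simp add: bin_def)
  then have "card (bin P (I - {w}) (P w)) = card (bin P I (P w)) - 1"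
    using fin by (simp add: bin_Diff finite_bin)
  moreover have "bin P (I - {w}) b = bin P I b" if "b \<noteq> P w" for b
    using that by (auto simp: bin_def)
  ultimately have "\<forall>b<n. bin_demand L n b \<le> card (bin P (I - {w}) b)"
    using demand demand_w by metis
  moreover have "\<forall>b<n. sum sz (bin P (I - {w}) b) \<le> 1"
  proof (intro allI impI)
    fix b assume "b < n"
    have "sum sz (bin P (I - {w}) b) \<le> sum sz (bin P I b)"
      using adm fin by (intro load_mono) (auto simp: bin_def)
    then show "sum sz (bin P (I - {w}) b) \<le> 1" using load \<open>b < n\<close> by fastforce
  qed
  ultimately show ?thesis
    using fin range class_sorted_subset[OF sorted] unfolding canonical_def by blast
qed

lemma canonical_insert_cheapest:
  assumes inv: "canonical L sz K I P n" and adm: "admissible (insert x I)" and x: "x \<notin> I"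
    and cheapest: "\<forall>i\<in>I. K x \<le> K i"
  shows "\<exists>P' n'. canonical L sz K (insert x I) P' n' \<and> relocation_cost cst I P P' = 0"
proof -
  have fin: "finite I" and range: "\<forall>i\<in>I. P i < n"
    and demand: "\<forall>b<n. bin_demand L n b \<le> card (bin P I b)"
    and load: "\<forall>b<n. sum sz (bin P I b) \<le> 1" and sorted: "class_sorted K I P"
    using inv unfolding canonical_def by blast+
  have bins: "bin (P(x := f)) (insert x I) b = (if b = f then insert x (bin P I b) else bin P I b)"
    for b f using x by (auto simp: bin_def)
  have single: "sum sz {x} \<le> 1" using adm demand_pos by (intro load_le_one) auto
  show ?thesis
  proof (cases "n = 0")
    case True
    then have "I = {}" using range by auto
    then have "canonical L sz K (insert x I) (P(x := 0)) 1"
      using single by (auto simp: canonical_def bin_def class_sorted_def bin_demand_def)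
    then show ?thesis using relocation_cost_new_item[OF x] by blast
  next
    case False
    then have last: "n - 1 < n" "Suc (n - 1) = n" by auto
    show ?thesis
    proof (cases "sum sz (insert x (bin P I (n - 1))) \<le> 1")
      case True
      have "1 \<le> card (insert x (bin P I (n - 1)))"
        using fin by (simp add: Suc_le_eq card_gt_0_iff finite_bin)
      then have "canonical L sz K (insert x (I - {})) (P(x := n - 1)) n"
        using True cheapest range last
        by (intro canonical_place_into_bin[OF inv x]) (auto simp: bin_demand_def)
      then show ?thesis using relocation_cost_new_item[OF x] by auto
    next
      case False
      have "L < card (insert x (bin P I (n - 1)))"
        using False adm fin by (intro card_gt_demand_if_overloaded) (auto simp: bin_def finite_bin)
      then have last_full: "L \<le> card (bin P I (n - 1))" using fin x by (simp add: bin_def)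
      have "bin P I n = {}" using range by (auto simp: bin_def)
      have "\<forall>b<Suc n. bin_demand L (Suc n) b \<le> card (bin (P(x := n)) (insert x I) b)"
      proof (intro allI impI)
        fix b assume "b < Suc n"
        then consider "b = n" | "b = n - 1" | "Suc b < n" using last by linarith
        then show "bin_demand L (Suc n) b \<le> card (bin (P(x := n)) (insert x I) b)"
        proof cases
          case 3
          then have "bin_demand L n b \<le> card (bin P I b)" using demand by simp
          then show ?thesis using 3 bins by (simp add: bin_demand_def)
        qed (use bins last_full \<open>bin P I n = {}\<close> in \<open>auto simp: bin_demand_def\<close>)
      qed
      moreover have "\<forall>b<Suc n. sum sz (bin (P(x := n)) (insert x I) b) \<le> 1"
        using bins load single \<open>bin P I n = {}\<close> by (auto simp: less_Suc_eq)
      moreover have "class_sorted K (insert x I) (P(x := n))"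
        using sorted x cheapest range by (intro class_sorted_insert) auto
      ultimately have "canonical L sz K (insert x I) (P(x := n)) (Suc n)"
        using fin range unfolding canonical_def by auto
      then show ?thesis using relocation_cost_new_item[OF x] by blast
    qed
  qed
qed

text \<open>The sharper bounds for items of size \<open>1/k\<close> and for segregated packings are what let the
  recursion of the insertion procedure close with the constant 9.\<close>

definition insertable :: "nat set \<Rightarrow> (nat \<Rightarrow> nat) \<Rightarrow> nat \<Rightarrow> bool" where
  "insertable I P x \<longleftrightarrow> (\<exists>P' n'. canonical L sz K (insert x I) P' n'
     \<and> relocation_cost cst I P P' \<le> 9 * K x
     \<and> (sz x = 1 / real k \<longrightarrow> relocation_cost cst I P P' \<le> 5 * K x)
     \<and> (segregated K I P x \<longrightarrow> relocation_cost cst I P P' \<le> 6 * K x))"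

definition insertable_below :: "nat \<Rightarrow> bool" where
  "insertable_below c \<longleftrightarrow> (\<forall>J Q n w. card {i \<in> J. K i < K w} < c \<longrightarrow> canonical L sz K J Q n
     \<longrightarrow> admissible (insert w J) \<longrightarrow> w \<notin> J \<longrightarrow> insertable J Q w)"

lemma insertable_belowD:
  "insertable_below c \<Longrightarrow> canonical L sz K J Q n \<Longrightarrow> card {i \<in> J. K i < K w} < c
    \<Longrightarrow> admissible (insert w J) \<Longrightarrow> w \<notin> J \<Longrightarrow> insertable J Q w"
  unfolding insertable_below_def by blast

lemma insertable_smallD:
  assumes "insertable J Q w" "sz w = 1 / real k"
  obtains P' n' where "canonical L sz K (insert w J) P' n'" "relocation_cost cst J Q P' \<le> 5 * K w"
  using assms unfolding insertable_def by blast

lemma insertable_segregatedD: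
  assumes "insertable J Q w" "segregated K J Q w"
  obtains P' n' where "canonical L sz K (insert w J) P' n'" "relocation_cost cst J Q P' \<le> 6 * K w"
  using assms unfolding insertable_def by blast

lemma insertableI:
  assumes "canonical L sz K (insert x I) P' n'" "relocation_cost cst I P P' \<le> c * K x"
    "0 \<le> K x" "c \<le> 6" "sz x = 1 / real k \<Longrightarrow> c \<le> 5"
  shows "insertable I P x"
proof -
  have "c * K x \<le> 6 * K x" "sz x = 1 / real k \<Longrightarrow> c * K x \<le> 5 * K x"
    using assms(3-5) by (simp_all add: mult_right_mono)
  moreover have "6 * K x \<le> 9 * K x" using assms(3) by simp
  ultimately show ?thesis using assms(1,2) unfolding insertable_def
    by (intro exI[of _ P'] exI[of _ n']) auto
qed

end

locale first_cheaper_bin = size_class +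
  fixes I :: "nat set" and P :: "nat \<Rightarrow> nat" and n x w :: nat
  assumes canonical: "canonical L sz K I P n" and adm: "admissible (insert x I)" and x_new: "x \<notin> I"
    and w: "w \<in> I" "K w < K x" and first: "\<forall>i\<in>I. K i < K x \<longrightarrow> P w \<le> P i"
begin

lemma fin: "finite I" and range: "\<forall>i\<in>I. P i < n"
  and demand: "\<forall>b<n. bin_demand L n b \<le> card (bin P I b)"
  and load: "\<forall>b<n. sum sz (bin P I b) \<le> 1" and sorted: "class_sorted K I P"
  using canonical unfolding canonical_def by blast+

lemma before: "\<forall>i\<in>I. P i < P w \<longrightarrow> K x \<le> K i"
  using first by (meson not_less)

lemma after: "\<forall>i\<in>I. P w < P i \<longrightarrow> K i \<le> K x"
  using sorted w unfolding class_sorted_def by force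

lemma w_bin: "w \<in> bin P I (P w)" "x \<notin> bin P I (P w)" "bin P I (P w) \<subseteq> I"
  using w x_new by (auto simp: bin_def)

lemma Pw_less: "P w < n"
  using range w by blast

lemma costs: "\<forall>i\<in>insert x I. 0 \<le> cst i \<and> cst i \<le> K i"
  using adm unfolding admissible_def by blast

lemma fits_into_bin:
  assumes "sum sz (insert x (bin P I (P w))) \<le> 1"
  shows "insertable I P x"
proof -
  have "bin_demand L n (P w) \<le> card (insert x (bin P I (P w) - {}))"
    using demand Pw_less w_bin fin by (simp add: finite_bin le_SucI)
  then have "canonical L sz K (insert x (I - {})) (P(x := P w)) n"
    using assms before after Pw_less by (intro canonical_place_into_bin[OF canonical x_new]) auto
  then show ?thesis
    using relocation_cost_new_item[OF x_new] costs by (intro insertableI[of _ _ _ _ _ 0]) auto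
qed

lemma cheaper_decreases:
  "J \<subseteq> {i \<in> I. K i < K x} - {v} \<Longrightarrow> v \<in> I \<Longrightarrow> K v < K x
    \<Longrightarrow> card J < card {i \<in> I. K i < K x}"
  using card_cheaper_decreases[OF fin] by blast

lemma replaces_item:
  assumes fits: "sum sz (insert x (bin P I (P w) - {w})) \<le> 1"
    and IH: "insertable_below (card {i \<in> I. K i < K x})"
  shows "insertable I P x"
proof -
  define I1 where "I1 = insert x (I - {w})"
  have "card (insert x (bin P I (P w) - {w})) = card (bin P I (P w))"
    using w_bin card.remove[OF finite_bin[OF fin] w_bin(1)] fin by (simp add: finite_bin)
  then have "canonical L sz K I1 (P(x := P w)) n"
    unfolding I1_def using fits demand before after Pw_less w_bin
    by (intro canonical_place_into_bin[OF canonical x_new]) auto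
  moreover have "card {i \<in> I1. K i < K w} < card {i \<in> I. K i < K x}"
    using w by (intro cheaper_decreases) (auto simp: I1_def)
  moreover have I1: "insert w I1 = insert x I" "w \<notin> I1" using w x_new by (auto simp: I1_def)
  ultimately have "insertable I1 (P(x := P w)) w"
    using IH adm unfolding insertable_below_def by auto
  then obtain P2 n2 where P2: "canonical L sz K (insert x I) P2 n2"
    "relocation_cost cst I1 (P(x := P w)) P2 \<le> 9 * K w"
    unfolding insertable_def I1(1) by blast
  have "relocation_cost cst I P P2
      \<le> sum cst {w} + relocation_cost cst I1 (P(x := P w)) P2 + relocation_cost cst (insert w I1) P2 P2"
    using fin w costs x_new by (intro relocation_cost_chain) (auto simp: I1_def)
  moreover have "cst w \<le> K w" using costs w by blast
  ultimately have "relocation_cost cst I P P2 \<le> 10 * K w"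
    using P2(2) by (simp add: relocation_cost_self)
  then have "relocation_cost cst I P P2 \<le> 5 * K x" using class_gap[OF w(2)] by simp
  then show ?thesis using P2(1) costs by (intro insertableI[of _ _ _ _ _ 5]) auto
qed

lemma overfull_bin:
  assumes "1 < sum sz (insert x (bin P I (P w) - {w}))"
  shows "card (bin P I (P w)) = k" "\<forall>i\<in>bin P I (P w). sz i = 1 / real k"
    and "sz x \<noteq> 1 / real k" "L = k - 1" "2 \<le> k"
proof -
  let ?B = "bin P I (P w)"
  have finB: "finite ?B" using fin by (rule finite_bin)
  have card_eq: "card (insert x (?B - {w})) = card ?B"
    using w_bin card.remove[OF finB w_bin(1)] finB by simp
  have "insert x (?B - {w}) \<subseteq> insert x I" using w_bin by blast
  then have "L < card (insert x (?B - {w}))"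
    using assms finB by (intro card_gt_demand_if_overloaded[OF adm]) auto
  then have "k \<le> card ?B" using card_eq demand_cases by linarith
  moreover have "admissible I" using adm by (rule admissible_subset) auto
  moreover have "sum sz ?B \<le> 1" using load Pw_less by blast
  ultimately show card: "card ?B = k" and small: "\<forall>i\<in>?B. sz i = 1 / real k"
    using full_bin_uniform[of I ?B] w_bin(3) finB by blast+
  show x_big: "sz x \<noteq> 1 / real k"
  proof
    assume "sz x = 1 / real k"
    then have "\<forall>i\<in>insert x (?B - {w}). sz i = 1 / real k" using small by blast
    then have "sum sz (insert x (?B - {w})) = sum (\<lambda>_. 1 / real k) (insert x (?B - {w}))"
      by (intro sum.cong) auto
    also have "\<dots> = real (card (insert x (?B - {w}))) * (1 / real k)" by simp
    also have "\<dots> = 1" using card card_eq k_pos by simp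
    finally show False using assms by simp
  qed
  then show "L = k - 1" "2 \<le> k" using demand_cases adm unfolding admissible_def by auto
qed

text \<open>When \<open>x\<close> does not fit in place of \<open>w\<close>, it takes the place of two items of size \<open>1/k\<close>
  and lower cost class, both reinserted, \<dots>\<close>

lemma replaces_two_items:
  assumes over: "1 < sum sz (insert x (bin P I (P w) - {w}))"
    and w2: "w2 \<in> bin P I (P w)" "w2 \<noteq> w" "K w2 < K x"
    and IH: "insertable_below (card {i \<in> I. K i < K x})"
  shows "insertable I P x"
proof -
  note full = overfull_bin[OF over]
  define I1 where "I1 = insert x (I - {w, w2})"
  define I2 where "I2 = insert w I1"
  have w2I: "w2 \<in> I" using w2 by (simp add: bin_def)
  have "card (insert x (bin P I (P w) - {w, w2})) = L"
    using w_bin w2 fin full by (simp add: finite_bin card_insert_if)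
  then have "canonical L sz K I1 (P(x := P w)) n"
    unfolding I1_def using demand_pos before after Pw_less w_bin w2 fin adm
    by (intro canonical_place_into_bin[OF canonical x_new] load_le_one)
      (auto simp: bin_demand_def finite_bin)
  moreover have "card {i \<in> I1. K i < K w} < card {i \<in> I. K i < K x}"
    using w by (intro cheaper_decreases) (auto simp: I1_def)
  moreover have "admissible (insert w I1)"
    by (rule admissible_subset[OF adm]) (use w in \<open>auto simp: I1_def\<close>)
  moreover have "w \<notin> I1" using w x_new by (auto simp: I1_def)
  ultimately have "insertable I1 (P(x := P w)) w" by (rule insertable_belowD[OF IH])
  moreover have "sz w = 1 / real k" using full(2) w_bin by blast
  ultimately obtain P2 n2 where P2: "canonical L sz K I2 P2 n2"
    "relocation_cost cst I1 (P(x := P w)) P2 \<le> 5 * K w"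
    unfolding I2_def by (rule insertable_smallD)
  have I2: "insert w2 I2 = insert x I" "w2 \<notin> I2" using w w2I w2(2) x_new
    by (auto simp: I1_def I2_def)
  moreover have "card {i \<in> I2. K i < K w2} < card {i \<in> I. K i < K x}"
    using w2I w2(2,3) w by (intro cheaper_decreases) (auto simp: I1_def I2_def)
  moreover have "admissible (insert w2 I2)" using adm I2(1) by simp
  ultimately have "insertable I2 P2 w2" using insertable_belowD[OF IH P2(1)] by blast
  moreover have "sz w2 = 1 / real k" using full(2) w2 by blast
  ultimately obtain P3 n3 where P3: "canonical L sz K (insert x I) P3 n3"
    "relocation_cost cst I2 P2 P3 \<le> 5 * K w2"
    unfolding I2(1)[symmetric] by (rule insertable_smallD)
  have "relocation_cost cst I P P3
      \<le> sum cst {w, w2} + relocation_cost cst I1 (P(x := P w)) P2 + relocation_cost cst I2 P2 P3"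
    using fin w w2I costs x_new by (intro relocation_cost_chain) (auto simp: I1_def I2_def)
  moreover have "cst w \<le> K w" "cst w2 \<le> K w2" using costs w w2I by auto
  then have "sum cst {w, w2} \<le> K w + K w2" using w2(2) by simp
  moreover have "2 * K w \<le> K x" "2 * K w2 \<le> K x" using class_gap w(2) w2(3) by auto
  ultimately have "relocation_cost cst I P P3 \<le> 6 * K x" using P2(2) P3(2) by simp
  then show ?thesis using P3(1) costs full(3) by (intro insertableI[of _ _ _ _ _ 6]) auto
qed

text \<open>\<dots> and when \<open>w\<close> is the only such item of its bin, \<open>w\<close> is evicted and reinserted after \<open>x\<close>,
  whose own insertion then happens in a segregated packing.\<close>

lemma evicts_item:
  assumes over: "1 < sum sz (insert x (bin P I (P w) - {w}))"
    and alone: "\<forall>w2\<in>bin P I (P w). w2 \<noteq> w \<longrightarrow> K x \<le> K w2"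
    and IH: "insertable_below (card {i \<in> I. K i < K x})"
  shows "insertable I P x"
proof -
  note full = overfull_bin[OF over]
  define I1 where "I1 = I - {w}"
  define I2 where "I2 = insert x I1"
  have "canonical L sz K I1 P n"
    unfolding I1_def using full demand_pos w
    by (intro canonical_remove[OF canonical admissible_subset[OF adm]]) (auto simp: bin_demand_def)
  moreover have "segregated K I1 P x"
    unfolding segregated_def
  proof (intro ballI impI)
    fix i j assume ij: "i \<in> I1" "j \<in> I1" "P i = P j" "K i < K x"
    have "P i \<noteq> P w" using alone ij by (force simp: I1_def bin_def)
    then have "P w < P j" using first ij by (force simp: I1_def)
    then show "K j < K x" using sorted ij w unfolding class_sorted_def I1_def by force
  qed
  moreover have "card {i \<in> I1. K i < K x} < card {i \<in> I. K i < K x}"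
    using w by (intro cheaper_decreases) (auto simp: I1_def)
  moreover have "admissible (insert x I1)"
    by (rule admissible_subset[OF adm]) (auto simp: I1_def)
  moreover have "x \<notin> I1" using x_new by (simp add: I1_def)
  ultimately have "insertable I1 P x" and "segregated K I1 P x"
    using insertable_belowD[OF IH] by blast+
  then obtain P2 n2 where P2: "canonical L sz K I2 P2 n2" "relocation_cost cst I1 P P2 \<le> 6 * K x"
    unfolding I2_def by (rule insertable_segregatedD)
  have I2: "insert w I2 = insert x I" "w \<notin> I2" using w x_new by (auto simp: I1_def I2_def)
  moreover have "card {i \<in> I2. K i < K w} < card {i \<in> I. K i < K x}"
    using w by (intro cheaper_decreases) (auto simp: I1_def I2_def)
  moreover have "admissible (insert w I2)" using adm I2(1) by simp
  ultimately have "insertable I2 P2 w" using insertable_belowD[OF IH P2(1)] by blast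
  moreover have "sz w = 1 / real k" using full(2) w_bin by blast
  ultimately obtain P3 n3 where P3: "canonical L sz K (insert x I) P3 n3"
    "relocation_cost cst I2 P2 P3 \<le> 5 * K w"
    unfolding I2(1)[symmetric] by (rule insertable_smallD)
  have "relocation_cost cst I P P3
      \<le> sum cst {w} + relocation_cost cst I1 P P2 + relocation_cost cst I2 P2 P3"
    using fin w costs x_new by (intro relocation_cost_chain) (auto simp: I1_def I2_def)
  moreover have "cst w \<le> K w" "2 * K w \<le> K x" using costs w class_gap by auto
  ultimately have "relocation_cost cst I P P3 \<le> 9 * K x" using P2(2) P3(2) by simp
  moreover have "\<not> segregated K I P x"
  proof
    assume seg: "segregated K I P x"
    have "card (bin P I (P w) - {w}) \<noteq> 0" using full w_bin fin by (simp add: finite_bin)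
    then have "bin P I (P w) - {w} \<noteq> {}" by (metis card.empty)
    then obtain w2 where "w2 \<in> bin P I (P w)" "w2 \<noteq> w" by blast
    then show False using seg alone w unfolding segregated_def bin_def by fastforce
  qed
  ultimately show ?thesis using P3(1) full(3) unfolding insertable_def by blast
qed

end

context size_class
begin

text \<open>Every displaced item has fewer items of lower cost class than itself than \<open>x\<close> had.\<close>

lemma insertable_step:
  assumes IH: "insertable_below (card {i \<in> I. K i < K x})"
    and inv: "canonical L sz K I P n" and adm: "admissible (insert x I)" and x: "x \<notin> I"
  shows "insertable I P x"
proof (cases "\<exists>i\<in>I. K i < K x")
  case False
  then obtain P' n' where "canonical L sz K (insert x I) P' n'" "relocation_cost cst I P P' = 0"
    using canonical_insert_cheapest[OF inv adm x] by (meson not_less)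
  moreover have "0 \<le> K x" using adm unfolding admissible_def by force
  ultimately show ?thesis by (intro insertableI[of _ _ _ _ _ 0]) auto
next
  case True
  then obtain w where w: "w \<in> I" "K w < K x" and first: "\<forall>i\<in>I. K i < K x \<longrightarrow> P w \<le> P i"
    using ex_has_least_nat[of "\<lambda>i. i \<in> I \<and> K i < K x" _ P] by blast
  interpret first_cheaper_bin k L sz cst K I P n x w
    using inv adm x w first by unfold_locales
  consider "sum sz (insert x (bin P I (P w))) \<le> 1"
    | "sum sz (insert x (bin P I (P w) - {w})) \<le> 1"
    | (over) "1 < sum sz (insert x (bin P I (P w) - {w}))"
    by linarith
  then show ?thesis
  proof cases
    case over
    show ?thesis
    proof (cases "\<exists>w2\<in>bin P I (P w). w2 \<noteq> w \<and> K w2 < K x")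
      case True
      then show ?thesis using replaces_two_items[OF over _ _ _ IH] by blast
    next
      case False
      then show ?thesis using evicts_item[OF over _ IH] by (meson not_less)
    qed
  qed (use fits_into_bin replaces_item[OF _ IH] in blast)+
qed

lemma canonical_insert:
  assumes "canonical L sz K I P n" "admissible (insert x I)" "x \<notin> I"
  shows "\<exists>P' n'. canonical L sz K (insert x I) P' n' \<and> relocation_cost cst I P P' \<le> 9 * K x"
proof -
  have "insertable_below c" for c
  proof (induction c rule: less_induct)
    case (less c)
    show ?case
      unfolding insertable_below_def using less insertable_step by blast
  qed
  then have "insertable I P x"
    using assms by (intro insertable_step) auto
  then show ?thesis unfolding insertable_def by blast
qed

lemma canonical_bins:
  assumes inv: "canonical L sz K I P n" and adm: "admissible I"
  shows "\<forall>b. sum sz (bin P I b) \<le> 1"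
    and "\<exists>b0. \<forall>b\<in>P ` I. b \<noteq> b0 \<longrightarrow> L \<le> card (bin P I b)"
    and "L = k \<Longrightarrow> \<exists>b0. \<forall>b\<in>P ` I. b \<noteq> b0 \<longrightarrow> card (bin P I b) = k"
proof -
  have fin: "finite I" and range: "\<forall>i\<in>I. P i < n"
    and demand: "\<forall>b<n. bin_demand L n b \<le> card (bin P I b)"
    and load: "\<forall>b<n. sum sz (bin P I b) \<le> 1"
    using inv unfolding canonical_def by blast+
  have "bin P I b = {}" if "\<not> b < n" for b using range that by (auto simp: bin_def)
  then show loads: "\<forall>b. sum sz (bin P I b) \<le> 1" using load by (metis sum.empty zero_le_one)
  have quota: "\<forall>b\<in>P ` I. b \<noteq> n - 1 \<longrightarrow> L \<le> card (bin P I b)"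
  proof (intro ballI impI)
    fix b assume "b \<in> P ` I" "b \<noteq> n - 1"
    then have "b < n" "Suc b \<noteq> n" using range by auto
    then have "bin_demand L n b \<le> card (bin P I b)" "bin_demand L n b = L"
      using demand by (auto simp: bin_demand_def)
    then show "L \<le> card (bin P I b)" by simp
  qed
  then show "\<exists>b0. \<forall>b\<in>P ` I. b \<noteq> b0 \<longrightarrow> L \<le> card (bin P I b)" by blast
  assume "L = k"
  have "card (bin P I b) = k" if "b \<in> P ` I" "b \<noteq> n - 1" for b
    using full_bin_uniform(1)[OF adm _ finite_bin[OF fin] loads[rule_format]] quota that \<open>L = k\<close>
    by (auto simp: bin_def)
  then show "\<exists>b0. \<forall>b\<in>P ` I. b \<noteq> b0 \<longrightarrow> card (bin P I b) = k" by blast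
qed

end

section \<open>The algorithm\<close>

lemma items_Nil: "items [] = Map.empty"
  by (simp add: items_def)

lemma items_snoc: "items (us @ [u]) = step (items us) u"
  by (simp add: items_def)

lemma valid_seq_snoc: "valid_seq (us @ [u]) \<longleftrightarrow> valid_seq us \<and> upd_ok (items us) u"
  unfolding valid_seq_def by (auto simp: less_Suc_eq nth_append)

lemma valid_seq_take: "valid_seq us \<Longrightarrow> valid_seq (take t us)"
  unfolding valid_seq_def by (simp add: min_def)

lemma sizes_in_snoc: "sizes_in Q (us @ [u]) \<longleftrightarrow> sizes_in Q us \<and> (\<forall>i s c. u = Ins i s c \<longrightarrow> Q s)"
  by (auto simp: sizes_in_def)

lemma sizes_in_take: "sizes_in Q us \<Longrightarrow> sizes_in Q (take t us)"
  unfolding sizes_in_def by (meson in_set_takeD)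

lemma items_SomeD: "items us i = Some (s, c) \<Longrightarrow> Ins i s c \<in> set us"
proof (induction us arbitrary: i s c rule: rev_induct)
  case (snoc u us)
  then show ?case by (cases u) (auto simp: items_snoc split: if_splits)
qed (simp add: items_Nil)

lemma valid_seq_Ins: "valid_seq us \<Longrightarrow> Ins i s c \<in> set us \<Longrightarrow> 0 < s \<and> s \<le> 1 \<and> 0 \<le> c"
  unfolding valid_seq_def by (metis in_set_conv_nth upd_ok.simps(1))

lemma in_class_unique:
  assumes "1 \<le> k" "1 \<le> k'" "in_class k s" "in_class k' s"
  shows "k = k'"
proof -
  have "k' \<le> k" if "1 \<le> k" "1 \<le> k'" "in_class k s" "in_class k' s" for k k'
  proof (cases "k' = 1")
    case False
    then have "1 / real k < 1 / (real k' - 1)" "0 < real k' - 1"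
      using that unfolding in_class_def by auto
    then have "real k' - 1 < real k" using that by (simp add: divide_less_cancel field_simps)
    then show ?thesis by simp
  qed (use that in simp)
  then show ?thesis using assms by (meson antisym)
qed

definition item_class :: "state \<Rightarrow> nat \<Rightarrow> real" where
  "item_class S i = cost_class (cost_of S i)"

definition bin_quota :: "nat \<Rightarrow> upd list \<Rightarrow> nat" where
  "bin_quota k us = (if sizes_in (\<lambda>s. s = 1 / real k) us then k else k - 1)"

text \<open>The size class \<open>k\<close> of an update sequence is determined by any of its items, so the
  quantifier over \<open>k\<close> only matters while no item is present.\<close>

definition good_packing :: "upd list \<Rightarrow> (nat \<Rightarrow> nat) \<Rightarrow> bool" where
  "good_packing us P \<longleftrightarrow> (\<forall>k. 1 \<le> k \<and> valid_seq us \<and> sizes_in (in_class k) us \<longrightarrow>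
     (\<exists>n. canonical (bin_quota k us) (size_of (items us)) (item_class (items us)) (dom (items us)) P n))"

lemma size_class_items:
  assumes "valid_seq us" "sizes_in (in_class k) us" "1 \<le> k"
  shows "size_class k (bin_quota k us) (item_class S)"
proof
  show "1 \<le> k" by (rule assms(3))
  have "sizes_in (\<lambda>s. s = 1 / real k) us" if "k = 1"
    using assms valid_seq_Ins that unfolding sizes_in_def in_class_def by fastforce
  then show "bin_quota k us = k \<or> bin_quota k us = k - 1 \<and> 2 \<le> k"
    using assms(3) by (cases "k = 1") (auto simp: bin_quota_def)
qed (use cost_class_gap in \<open>simp add: item_class_def\<close>)

lemma admissible_items:
  assumes "valid_seq us" "sizes_in (in_class k) us" "1 \<le> k"
  shows "size_class.admissible k (bin_quota k us) (size_of (items us)) (cost_of (items us))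
    (item_class (items us)) (dom (items us))"
proof -
  interpret size_class k "bin_quota k us" "size_of (items us)" "cost_of (items us)" "item_class (items us)"
    using size_class_items[OF assms] .
  show ?thesis
    unfolding admissible_def
  proof (intro conjI ballI impI)
    fix i assume "i \<in> dom (items us)"
    then obtain s c where sc: "items us i = Some (s, c)" by auto
    then have "Ins i s c \<in> set us" by (rule items_SomeD)
    then have "in_class k s" "0 \<le> c" "bin_quota k us = k \<Longrightarrow> s = 1 / real k"
      using assms valid_seq_Ins unfolding sizes_in_def bin_quota_def by (auto split: if_splits)
    then show "in_class k (size_of (items us) i)" "0 \<le> cost_of (items us) i"
      "cost_of (items us) i \<le> item_class (items us) i"
      "bin_quota k us = k \<Longrightarrow> size_of (items us) i = 1 / real k"
      using sc cost_class_ge[of c] by (simp_all add: size_of_def cost_of_def item_class_def)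
  qed
qed

lemma move_cost_eq_relocation_cost:
  assumes "dom S \<inter> dom S' = J" "\<forall>j\<in>J. cost_of S' j = cst j"
  shows "move_cost S S' P P' = relocation_cost cst J P P'"
  unfolding move_cost_def relocation_cost_def using assms by (intro sum.cong) auto

lemma canonical_step_Ins:
  assumes valid: "valid_seq (us @ [Ins i s c])" and sizes: "sizes_in (in_class k) (us @ [Ins i s c])"
    and k: "1 \<le> k"
    and inv: "canonical (bin_quota k us) (size_of (items us)) (item_class (items us)) (dom (items us)) P n"
  defines "S \<equiv> items us" and "S' \<equiv> items (us @ [Ins i s c])"
  shows "\<exists>P' n'. canonical (bin_quota k (us @ [Ins i s c])) (size_of S') (item_class S') (dom S') P' n'
    \<and> move_cost S S' P P' \<le> 18 * c"
proof -
  let ?L = "bin_quota k (us @ [Ins i s c])"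
  interpret size_class k ?L "size_of S'" "cost_of S'" "item_class S'"
    using size_class_items[OF valid sizes k] .
  have new: "i \<notin> dom S" "0 \<le> c" using valid by (auto simp: valid_seq_snoc S_def)
  have S': "S' = S(i \<mapsto> (s, c))" by (simp add: S_def S'_def items_snoc)
  have "?L \<le> bin_quota k us" by (auto simp: bin_quota_def sizes_in_snoc)
  moreover have "\<forall>j\<in>dom S. size_of S j = size_of S' j" "\<forall>j\<in>dom S. item_class S j = item_class S' j"
    using S' new by (auto simp: size_of_def item_class_def cost_of_def)
  ultimately have "canonical ?L (size_of S') (item_class S') (dom S) P n"
    using canonical_cong inv unfolding S_def by blast
  moreover have "admissible (insert i (dom S))"
    using admissible_items[OF valid sizes k] S' unfolding S'_def by simp
  ultimately obtain P' n' where P': "canonical ?L (size_of S') (item_class S') (insert i (dom S)) P' n'"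
    "relocation_cost (cost_of S') (dom S) P P' \<le> 9 * item_class S' i"
    using canonical_insert new(1) by blast
  have "item_class S' i \<le> 2 * c" using S' new(2) cost_class_le_double by (simp add: item_class_def cost_of_def)
  moreover have "move_cost S S' P P' = relocation_cost (cost_of S') (dom S) P P'"
    using S' by (intro move_cost_eq_relocation_cost) auto
  ultimately show ?thesis using P' S' by auto
qed

lemma canonical_step_Del:
  assumes valid: "valid_seq (us @ [Del i])" and sizes: "sizes_in (in_class k) (us @ [Del i])"
    and k: "1 \<le> k"
    and inv: "canonical (bin_quota k us) (size_of (items us)) (item_class (items us)) (dom (items us)) P n"
  defines "S \<equiv> items us" and "S' \<equiv> items (us @ [Del i])"
  shows "\<exists>P' n'. canonical (bin_quota k (us @ [Del i])) (size_of S') (item_class S') (dom S') P' n'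
    \<and> move_cost S S' P P' \<le> 18 * cost_of S i"
proof -
  have valid_us: "valid_seq us" and sizes_us: "sizes_in (in_class k) us"
    using valid sizes by (simp_all add: valid_seq_snoc sizes_in_snoc)
  interpret size_class k "bin_quota k us" "size_of S" "cost_of S" "item_class S"
    using size_class_items[OF valid_us sizes_us k] .
  have adm: "admissible (dom S)" using admissible_items[OF valid_us sizes_us k] by (simp add: S_def)
  have i: "i \<in> dom S" using valid by (auto simp: valid_seq_snoc S_def)
  have S': "S' = S(i := None)" by (simp add: S_def S'_def items_snoc)
  obtain P' n' where P': "canonical (bin_quota k us) (size_of S) (item_class S) (dom S - {i}) P' n'"
    "relocation_cost (cost_of S) (dom S - {i}) P P' \<le> 2 * item_class S i"
    using canonical_delete[OF inv[folded S_def] adm i] by blast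
  have "bin_quota k (us @ [Del i]) = bin_quota k us" by (simp add: bin_quota_def sizes_in_snoc)
  moreover have "\<forall>j\<in>dom S - {i}. size_of S j = size_of S' j \<and> item_class S j = item_class S' j"
    using S' by (auto simp: size_of_def item_class_def cost_of_def)
  ultimately have "canonical (bin_quota k (us @ [Del i])) (size_of S') (item_class S') (dom S') P' n'"
    using canonical_cong[OF P'(1)] S' by simp
  moreover have "0 \<le> cost_of S i" "item_class S i \<le> 2 * cost_of S i"
    using adm i cost_class_le_double unfolding admissible_def item_class_def by blast+
  moreover have "move_cost S S' P P' = relocation_cost (cost_of S) (dom S - {i}) P P'"
    using S' by (intro move_cost_eq_relocation_cost) (auto simp: cost_of_def)
  ultimately show ?thesis using P'(2) by (intro exI[of _ P'] exI[of _ n']) simp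
qed

lemma good_packingI:
  assumes "1 \<le> k" "sizes_in (in_class k) us"
    and "canonical (bin_quota k us) (size_of (items us)) (item_class (items us)) (dom (items us)) P n"
  shows "good_packing us P"
  unfolding good_packing_def
proof (intro allI impI)
  fix k' assume k': "1 \<le> k' \<and> valid_seq us \<and> sizes_in (in_class k') us"
  show "\<exists>n. canonical (bin_quota k' us) (size_of (items us)) (item_class (items us)) (dom (items us)) P n"
  proof (cases "dom (items us) = {}")
    case True
    then show ?thesis using canonical_empty by metis
  next
    case False
    then obtain i where "i \<in> dom (items us)" by blast
    then obtain s c where "items us i = Some (s, c)" by auto
    then have "Ins i s c \<in> set us" by (rule items_SomeD)
    then have "in_class k s" "in_class k' s" using assms(2) k' unfolding sizes_in_def by blast+
    then have "k = k'" using in_class_unique assms(1) k' by blast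
    then show ?thesis using assms(3) by blast
  qed
qed

lemma good_packing_step:
  assumes good: "good_packing us P" and valid: "valid_seq (us @ [u])"
    and sizes: "sizes_in (in_class k) (us @ [u])" and k: "1 \<le> k"
  shows "\<exists>P'. good_packing (us @ [u]) P'
    \<and> move_cost (items us) (items (us @ [u])) P P' \<le> 18 * upd_cost (items us) u"
proof -
  have "valid_seq us" "sizes_in (in_class k) us"
    using valid sizes by (simp_all add: valid_seq_snoc sizes_in_snoc)
  then obtain n where
    "canonical (bin_quota k us) (size_of (items us)) (item_class (items us)) (dom (items us)) P n"
    using good k unfolding good_packing_def by blast
  then obtain P' n' where
    "canonical (bin_quota k (us @ [u])) (size_of (items (us @ [u]))) (item_class (items (us @ [u])))
       (dom (items (us @ [u]))) P' n'"
    "move_cost (items us) (items (us @ [u])) P P' \<le> 18 * upd_cost (items us) u"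
    using canonical_step_Ins[OF _ _ k] canonical_step_Del[OF _ _ k] valid sizes
    by (cases u) (auto, blast+)
  then show ?thesis using good_packingI[OF k sizes] by blast
qed

text \<open>The algorithm is specified by choice of a successor packing whose existence is guaranteed by
  the lemma above; the proofs of canonical_insert and canonical_delete construct one.\<close>

definition next_packing :: "upd list \<Rightarrow> upd \<Rightarrow> (nat \<Rightarrow> nat) \<Rightarrow> nat \<Rightarrow> nat" where
  "next_packing us u P = (SOME P'. good_packing (us @ [u]) P'
      \<and> move_cost (items us) (items (us @ [u])) P P' \<le> 18 * upd_cost (items us) u)"

primrec packing_rev :: "upd list \<Rightarrow> nat \<Rightarrow> nat" where
  "packing_rev [] = (\<lambda>_. 0)"
| "packing_rev (u # rs) = next_packing (rev rs) u (packing_rev rs)"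

definition packing :: "upd list \<Rightarrow> nat \<Rightarrow> nat" where
  "packing us = packing_rev (rev us)"

lemma packing_snoc: "packing (us @ [u]) = next_packing us u (packing us)"
  by (simp add: packing_def)

lemma next_packing_spec:
  assumes "good_packing us P" "valid_seq (us @ [u])" "sizes_in (in_class k) (us @ [u])" "1 \<le> k"
  shows "good_packing (us @ [u]) (next_packing us u P)"
    "move_cost (items us) (items (us @ [u])) P (next_packing us u P) \<le> 18 * upd_cost (items us) u"
  using someI_ex[OF good_packing_step[OF assms]] unfolding next_packing_def by blast+

lemma good_packing_packing:
  "valid_seq us \<Longrightarrow> sizes_in (in_class k) us \<Longrightarrow> 1 \<le> k \<Longrightarrow> good_packing us (packing us)"
proof (induction us rule: rev_induct)
  case Nil
  show ?case
    by (simp add: good_packing_def items_Nil packing_def) (blast intro: canonical_empty)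
next
  case (snoc u us)
  then have "good_packing us (packing us)" by (simp add: valid_seq_snoc sizes_in_snoc)
  then show ?case using next_packing_spec(1) snoc.prems by (simp add: packing_snoc)
qed

lemma packing_move_cost:
  assumes "valid_seq (us @ [u])" "sizes_in (in_class k) (us @ [u])" "1 \<le> k"
  shows "move_cost (items us) (items (us @ [u])) (packing us) (packing (us @ [u]))
    \<le> 18 * upd_cost (items us) u"
proof -
  have "good_packing us (packing us)"
    using assms by (intro good_packing_packing) (simp_all add: valid_seq_snoc sizes_in_snoc)
  then show ?thesis using next_packing_spec(2) assms by (simp add: packing_snoc)
qed

lemma packing_prefix_move_cost:
  assumes "t < length us" "valid_seq us" "sizes_in (in_class k) us" "1 \<le> k"
  shows "move_cost (items (take t us)) (items (take (Suc t) us))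
    (packing (take t us)) (packing (take (Suc t) us)) \<le> 18 * upd_cost (items (take t us)) (us ! t)"
proof -
  have "take (Suc t) us = take t us @ [us ! t]" using assms(1) by (simp add: take_Suc_conv_app_nth)
  then show ?thesis using packing_move_cost assms(2-4) valid_seq_take sizes_in_take by metis
qed

lemma packing_bins:
  assumes k: "1 \<le> k" and valid: "valid_seq us" and sizes: "sizes_in (in_class k) us"
  shows "feasible (items us) (packing us)
    \<and> (\<exists>b0. \<forall>b \<in> used_bins (items us) (packing us). b \<noteq> b0 \<longrightarrow>
        k - 1 \<le> bin_count (items us) (packing us) b)
    \<and> (sizes_in (\<lambda>s. s = 1 / real k) us \<longrightarrow>
        (\<exists>b0. \<forall>b \<in> used_bins (items us) (packing us). b \<noteq> b0 \<longrightarrow>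
           bin_count (items us) (packing us) b = k))"
proof -
  interpret size_class k "bin_quota k us" "size_of (items us)" "cost_of (items us)" "item_class (items us)"
    using size_class_items[OF valid sizes k] .
  obtain n where "canonical (bin_quota k us) (size_of (items us)) (item_class (items us))
      (dom (items us)) (packing us) n"
    using good_packing_packing[OF valid sizes k] valid sizes k unfolding good_packing_def by blast
  note bins = canonical_bins[OF this admissible_items[OF valid sizes k]]
  have "feasible (items us) (packing us)"
    using bins(1) unfolding feasible_def bin_load_def bin_def by blast
  moreover obtain b0 where "\<forall>b\<in>used_bins (items us) (packing us). b \<noteq> b0 \<longrightarrow>
      bin_quota k us \<le> bin_count (items us) (packing us) b"
    using bins(2) unfolding used_bins_def bin_count_def bin_def by blast
  moreover have "k - 1 \<le> bin_quota k us" by (simp add: bin_quota_def)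
  moreover have "\<exists>b0. \<forall>b \<in> used_bins (items us) (packing us). b \<noteq> b0 \<longrightarrow>
      bin_count (items us) (packing us) b = k" if "sizes_in (\<lambda>s. s = 1 / real k) us"
    using bins(3) that unfolding used_bins_def bin_count_def bin_def bin_quota_def by simp
  ultimately show ?thesis by (meson le_trans)
qed

theorem lemma3p3:
  shows "\<exists>(\<gamma>::real) (A :: upd list \<Rightarrow> nat \<Rightarrow> nat).
    \<forall>(k::nat) us. 1 \<le> k \<and> valid_seq us \<and> sizes_in (in_class k) us \<longrightarrow>
      (\<forall>t \<le> length us.
         feasible (items (take t us)) (A (take t us))
       \<and> (\<exists>b0. \<forall>b \<in> used_bins (items (take t us)) (A (take t us)). b \<noteq> b0 \<longrightarrow>
              k - 1 \<le> bin_count (items (take t us)) (A (take t us)) b)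
       \<and> (sizes_in (\<lambda>s. s = 1 / real k) (take t us) \<longrightarrow>
           (\<exists>b0. \<forall>b \<in> used_bins (items (take t us)) (A (take t us)). b \<noteq> b0 \<longrightarrow>
              bin_count (items (take t us)) (A (take t us)) b = k)))
    \<and> (\<forall>t < length us.
         move_cost (items (take t us)) (items (take (Suc t) us))
                   (A (take t us)) (A (take (Suc t) us))
           \<le> \<gamma> * upd_cost (items (take t us)) (us ! t))"
  by (rule exI[of _ 18], rule exI[of _ packing], intro allI impI conjI)
    (use packing_bins[OF _ valid_seq_take sizes_in_take] packing_prefix_move_cost in auto)

end
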